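(* Let $p$ be a positive continuous even function on $(-1,1)$ such that no nontrivial solution $u$ of $u''+pu=0$ has more than one zero in $(-1,1)$, and let $F$ be the solution of $\mathcal{S}F=2p$ with $F(0)=0$, $F'(0)=1$, $F''(0)=0$. If $\varphi:(-1,1)\to\mathbb{R}^n$ is a $C^3$ curve with $\varphi'(x)\neq0$ and $S_1\varphi(x)\le 2p(x)$ for all $x\in(-1,1)$, then $$\frac{|\varphi(x_1)-\varphi(x_2)|}{\{|\varphi'(x_1)|\,|\varphi'(x_2)|\}^{1/2}}\ \ge\ \frac{|F(x_1)-F(x_2)|}{\{F'(x_1)F'(x_2)\}^{1/2}}\qquad\text{for all } x_1,x_2\in(-1,1).$$
   Context: For a real function $g$ with $g'\neq0$, $\mathcal{S}g=(g''/g')'-\tfrac12(g''/g')^2$. Equivalently $F(x)=\int_0^x u_0(t)^{-2}dt$ where $u_0$ solves $u''+pu=0$, $u_0(0)=1$, $u_0'(0)=0$ (and $u_0$ has no zeros in $(-1,1)$). For a $C^3$ curve $\varphi$ into $\mathbb{R}^n$ with $\varphi'\neq0$, the Ahlfors Schwarzian is $S_1\varphi=\frac{\langle\varphi',\varphi'''\rangle}{|\varphi'|^2}-3\frac{\langle\varphi',\varphi''\rangle^2}{|\varphi'|^4}+\frac32\frac{|\varphi''|^2}{|\varphi'|^2}$, with Euclidean inner product and norm. *)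

theory Defs
  imports "HOL-Analysis.Analysis"
begin

text \<open>Schwarzian derivative of a real function at a point, written in terms of the
values g1 = g', g2 = g'', g3 = g''' there:
  (g''/g')' - 1/2 (g''/g')^2 = g'''/g' - (g''/g')^2 - 1/2 (g''/g')^2.\<close>
definition schwarzian_val :: "real \<Rightarrow> real \<Rightarrow> real \<Rightarrow> real" where
  "schwarzian_val g1 g2 g3 = (g3 / g1 - (g2 / g1)^2) - (1/2) * (g2 / g1)^2"

text \<open>Ahlfors Schwarzian of a curve at a point, in terms of the values d1, d2, d3 of
the first three derivatives there.\<close>
definition ahlfors_S1 :: "'a::real_inner \<Rightarrow> 'a \<Rightarrow> 'a \<Rightarrow> real" where
  "ahlfors_S1 d1 d2 d3 =
     (d1 \<bullet> d3) / (norm d1)^2 - 3 * (d1 \<bullet> d2)^2 / (norm d1)^4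
     + (3/2) * (norm d2)^2 / (norm d1)^2"

definition disconjugate :: "(real \<Rightarrow> real) \<Rightarrow> bool" where
  "disconjugate p \<longleftrightarrow>
    (\<forall>u u1 u2.
       (\<forall>x\<in>{-1<..<1}. (u has_real_derivative u1 x) (at x)
                      \<and> (u1 has_real_derivative u2 x) (at x)
                      \<and> u2 x + p x * u x = 0)
       \<and> (\<exists>x\<in>{-1<..<1}. u x \<noteq> 0)
       \<longrightarrow> \<not> (\<exists>a\<in>{-1<..<1}. \<exists>b\<in>{-1<..<1}. a \<noteq> b \<and> u a = 0 \<and> u b = 0))"

end

theory Submission
  imports Defs
begin

(* The proof is a Sturm comparison.  Fix a base point a < b.  For the model function F with
   S F = 2p, the normalised difference  u = (F - F a) / sqrt F'  solves  u'' + p u = 0, and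
   u(a) = 0.  For the curve, the normalised distance  w = |phi - phi a| / sqrt |phi'|  satisfies
   w'' + (S1 phi / 2) w >= 0  wherever phi differs from phi a, by completing an inner-product
   square; so S1 phi <= 2p makes w a supersolution, also vanishing at a.  The Wronskian
   w' u - w u' then is nondecreasing and tends to 0 at a, hence w / u is nondecreasing and
   bounded below by its limit at a, namely sqrt |phi'(a)| / sqrt F'(a).  Evaluated at b this is
   the claimed inequality; a first-zero argument shows w stays positive on (a, b). *)

lemma has_real_derivative_inner:
  fixes f g :: "real \<Rightarrow> 'a::real_inner"
  assumes "(f has_vector_derivative f') (at x)" "(g has_vector_derivative g') (at x)"
  shows "((\<lambda>y. f y \<bullet> g y) has_real_derivative (f' \<bullet> g x + f x \<bullet> g')) (at x)"
proof -
  have "((\<lambda>y. f y \<bullet> g y) has_derivative (\<lambda>h. f x \<bullet> (h *\<^sub>R g') + (h *\<^sub>R f') \<bullet> g x)) (at x)"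
    using has_derivative_inner[OF assms[unfolded has_vector_derivative_def]] by simp
  then show ?thesis unfolding has_field_derivative_def
    by (rule has_derivative_eq_rhs) (auto simp: algebra_simps)
qed

lemma norm_difference_quotient_at_right:
  fixes f :: "real \<Rightarrow> 'a::real_normed_vector"
  assumes "(f has_vector_derivative f') (at a)"
  shows "((\<lambda>y. norm (f y - f a) / (y - a)) \<longlongrightarrow> norm f') (at_right a)"
proof -
  have "((\<lambda>y. ((f y - f a) - (y - a) *\<^sub>R f') /\<^sub>R norm (y - a)) \<longlongrightarrow> 0) (at a)"
    using assms unfolding has_vector_derivative_def has_derivative_at_within by simp
  then have "((\<lambda>y. norm ((f y - f a) /\<^sub>R (y - a) - f')) \<longlongrightarrow> 0) (at a)"
  proof (rule tendsto_norm_zero[THEN Lim_transform_eventually])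
    have "norm (((f y - f a) - (y - a) *\<^sub>R f') /\<^sub>R norm (y - a))
            = norm ((f y - f a) /\<^sub>R (y - a) - f')" if "y \<noteq> a" for y
    proof -
      have "(f y - f a) /\<^sub>R (y - a) - f' = ((f y - f a) - (y - a) *\<^sub>R f') /\<^sub>R (y - a)"
        using that by (simp add: scaleR_diff_right)
      then show ?thesis by simp
    qed
    then show "\<forall>\<^sub>F y in at a. norm (((f y - f a) - (y - a) *\<^sub>R f') /\<^sub>R norm (y - a))
            = norm ((f y - f a) /\<^sub>R (y - a) - f')"
      by (auto simp: eventually_at_filter)
  qed
  then have "((\<lambda>y. (f y - f a) /\<^sub>R (y - a)) \<longlongrightarrow> f') (at_right a)"
    using tendsto_norm_zero_iff LIM_zero_cancel filterlim_at_split by blast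
  then have "((\<lambda>y. norm ((f y - f a) /\<^sub>R (y - a))) \<longlongrightarrow> norm f') (at_right a)"
    by (rule tendsto_norm)
  then show ?thesis
    by (rule Lim_transform_eventually)
       (auto simp: eventually_at_right_field divide_inverse mult.commute intro: exI[of _ "a + 1"])
qed

text \<open>The algebraic heart of the Schwarzian inequality: for a = phi', x = phi - phi(a),
  b = phi'', the expression below is |y|^2 / |a|^2 for an explicit vector y, hence nonnegative.\<close>
lemma inner_square_completion:
  fixes x a b :: "'a::real_inner"
  assumes "a \<bullet> a > 0"
  shows "(a\<bullet>a)^2*((a\<bullet>a) + x\<bullet>b)*(x\<bullet>x) - (a\<bullet>a)^2*(x\<bullet>a)^2 - (x\<bullet>a)*(a\<bullet>b)*(a\<bullet>a)*(x\<bullet>x)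
        + (1/4)*(x\<bullet>x)^2*((a\<bullet>a)*(b\<bullet>b) - (a\<bullet>b)^2) \<ge> 0"
proof -
  define B where "B = a\<bullet>a"
  define y where "y = (B*B) *\<^sub>R x - (B*(x\<bullet>a)) *\<^sub>R a + (1/2*(x\<bullet>x)*B) *\<^sub>R b - (1/2*(x\<bullet>x)*(a\<bullet>b)) *\<^sub>R a"
  have "y \<bullet> y = B * ((a\<bullet>a)^2*((a\<bullet>a) + x\<bullet>b)*(x\<bullet>x) - (a\<bullet>a)^2*(x\<bullet>a)^2 - (x\<bullet>a)*(a\<bullet>b)*(a\<bullet>a)*(x\<bullet>x)
        + (1/4)*(x\<bullet>x)^2*((a\<bullet>a)*(b\<bullet>b) - (a\<bullet>b)^2))"
    unfolding y_def B_def
    by (simp add: inner_add_left inner_add_right inner_diff_left inner_diff_right inner_commute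
        algebra_simps power2_eq_square)
  moreover have "y \<bullet> y \<ge> 0" by simp
  ultimately show ?thesis using assms unfolding B_def
    by (simp add: zero_le_mult_iff)
qed

definition normalized_difference :: "(real \<Rightarrow> real) \<Rightarrow> (real \<Rightarrow> real) \<Rightarrow> real \<Rightarrow> real \<Rightarrow> real" where
  "normalized_difference F F1 a x = (F x - F a) / sqrt (F1 x)"

definition normalized_difference' ::
    "(real \<Rightarrow> real) \<Rightarrow> (real \<Rightarrow> real) \<Rightarrow> (real \<Rightarrow> real) \<Rightarrow> real \<Rightarrow> real \<Rightarrow> real" where
  "normalized_difference' F F1 F2 a x = sqrt (F1 x) - (F x - F a) * F2 x / (2 * sqrt (F1 x) ^ 3)"

lemma normalized_difference_derivatives:
  fixes F F1 F2 F3 :: "real \<Rightarrow> real"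
  assumes dF: "(F has_real_derivative F1 x) (at x)"
    and dF1: "(F1 has_real_derivative F2 x) (at x)"
    and dF2: "(F2 has_real_derivative F3 x) (at x)"
    and pos: "F1 x > 0"
  shows "(normalized_difference F F1 a has_real_derivative normalized_difference' F F1 F2 a x) (at x)"
    and "(normalized_difference' F F1 F2 a has_real_derivative
           - (schwarzian_val (F1 x) (F2 x) (F3 x) / 2) * normalized_difference F F1 a x) (at x)"
proof -
  define \<sigma> where "\<sigma> = (\<lambda>y. sqrt (F1 y))"
  have \<sigma>pos: "\<sigma> x > 0" and \<sigma>2: "F1 x = \<sigma> x ^ 2"
    using pos by (auto simp: \<sigma>_def)
  have d\<sigma>: "(\<sigma> has_real_derivative F2 x / (2 * \<sigma> x)) (at x)"
  proof -
    have "(\<sigma> has_real_derivative inverse (sqrt (F1 x)) / 2 * F2 x) (at x)"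
      unfolding \<sigma>_def using pos
      by (intro derivative_eq_intros DERIV_chain2[OF DERIV_real_sqrt] dF1) auto
    then show ?thesis unfolding \<sigma>_def by (simp add: field_simps)
  qed
  have u: "normalized_difference F F1 a = (\<lambda>y. (F y - F a) / \<sigma> y)"
    by (simp add: fun_eq_iff normalized_difference_def \<sigma>_def)
  have u1: "normalized_difference' F F1 F2 a = (\<lambda>y. \<sigma> y - (F y - F a) * F2 y / (2 * \<sigma> y ^ 3))"
    by (simp add: fun_eq_iff normalized_difference'_def \<sigma>_def)
  show "(normalized_difference F F1 a has_real_derivative normalized_difference' F F1 F2 a x) (at x)"
    unfolding u u1 using \<sigma>pos \<sigma>2
    by (auto intro!: derivative_eq_intros dF d\<sigma> simp: field_simps power_def)
  show "(normalized_difference' F F1 F2 a has_real_derivative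
           - (schwarzian_val (F1 x) (F2 x) (F3 x) / 2) * normalized_difference F F1 a x) (at x)"
    unfolding u u1 schwarzian_val_def using \<sigma>pos \<sigma>2
    by (auto intro!: derivative_eq_intros dF d\<sigma> dF2 simp: field_simps power_def)
qed

definition curve_ratio :: "(real \<Rightarrow> 'a::real_inner) \<Rightarrow> (real \<Rightarrow> 'a) \<Rightarrow> real \<Rightarrow> real \<Rightarrow> real" where
  "curve_ratio \<phi> \<phi>1 a x = norm (\<phi> x - \<phi> a) / sqrt (norm (\<phi>1 x))"

definition curve_ratio' ::
    "(real \<Rightarrow> 'a::real_inner) \<Rightarrow> (real \<Rightarrow> 'a) \<Rightarrow> (real \<Rightarrow> 'a) \<Rightarrow> real \<Rightarrow> real \<Rightarrow> real" where
  "curve_ratio' \<phi> \<phi>1 \<phi>2 a x =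
     ((\<phi> x - \<phi> a) \<bullet> \<phi>1 x) / (norm (\<phi> x - \<phi> a) * sqrt (norm (\<phi>1 x)))
     - norm (\<phi> x - \<phi> a) * (\<phi>1 x \<bullet> \<phi>2 x) / (2 * sqrt (norm (\<phi>1 x)) ^ 5)"

lemma curve_ratio_derivatives:
  fixes \<phi> \<phi>1 \<phi>2 \<phi>3 :: "real \<Rightarrow> 'a::real_inner"
  assumes d\<phi>: "(\<phi> has_vector_derivative \<phi>1 x) (at x)"
    and d\<phi>1: "(\<phi>1 has_vector_derivative \<phi>2 x) (at x)"
    and d\<phi>2: "(\<phi>2 has_vector_derivative \<phi>3 x) (at x)"
    and nz: "\<phi>1 x \<noteq> 0"
    and sep: "\<phi> x \<noteq> \<phi> a"
  shows "(curve_ratio \<phi> \<phi>1 a has_real_derivative curve_ratio' \<phi> \<phi>1 \<phi>2 a x) (at x)"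
    and "\<exists>w2. (curve_ratio' \<phi> \<phi>1 \<phi>2 a has_real_derivative w2) (at x)
             \<and> w2 + ahlfors_S1 (\<phi>1 x) (\<phi>2 x) (\<phi>3 x) / 2 * curve_ratio \<phi> \<phi>1 a x \<ge> 0"
proof -
  define R where "R = (\<lambda>y. \<phi> y - \<phi> a)"
  define A where "A = (\<lambda>y. R y \<bullet> R y)"
  define P where "P = (\<lambda>y. R y \<bullet> \<phi>1 y)"
  define Q where "Q = (\<lambda>y. R y \<bullet> \<phi>2 y)"
  define B where "B = (\<lambda>y. \<phi>1 y \<bullet> \<phi>1 y)"
  define C where "C = (\<lambda>y. \<phi>1 y \<bullet> \<phi>2 y)"
  define D where "D = (\<lambda>y. \<phi>2 y \<bullet> \<phi>2 y)"
  define E where "E = (\<lambda>y. \<phi>1 y \<bullet> \<phi>3 y)"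
  define r where "r = (\<lambda>y. sqrt (A y))"
  define s where "s = (\<lambda>y. sqrt (sqrt (B y)))"
  have w: "curve_ratio \<phi> \<phi>1 a = (\<lambda>y. r y / s y)"
    by (simp add: fun_eq_iff curve_ratio_def r_def s_def A_def B_def R_def norm_eq_sqrt_inner)
  have w1: "curve_ratio' \<phi> \<phi>1 \<phi>2 a = (\<lambda>y. P y / (r y * s y) - r y * C y / (2 * s y ^ 5))"
    by (simp add: fun_eq_iff curve_ratio'_def r_def s_def A_def B_def P_def C_def R_def
        norm_eq_sqrt_inner)
  have dR: "(R has_vector_derivative \<phi>1 x) (at x)"
    unfolding R_def using has_vector_derivative_diff[OF d\<phi> has_vector_derivative_const] by simp
  have dA: "(A has_real_derivative 2 * P x) (at x)"
    using has_real_derivative_inner[OF dR dR] unfolding A_def P_def by (simp add: inner_commute)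
  have dP: "(P has_real_derivative B x + Q x) (at x)"
    using has_real_derivative_inner[OF dR d\<phi>1] unfolding B_def P_def Q_def by simp
  have dB: "(B has_real_derivative 2 * C x) (at x)"
    using has_real_derivative_inner[OF d\<phi>1 d\<phi>1] unfolding B_def C_def by (simp add: inner_commute)
  have dC: "(C has_real_derivative D x + E x) (at x)"
    using has_real_derivative_inner[OF d\<phi>1 d\<phi>2] unfolding C_def D_def E_def by simp
  have Bpos: "B x > 0" using nz unfolding B_def by simp
  have Apos: "A x > 0" using sep unfolding A_def R_def by simp
  have spos: "s x > 0" and rpos: "r x > 0" using Bpos Apos unfolding s_def r_def by auto
  have s4: "B x = s x ^ 4"
  proof -
    have "s x ^ 4 = (sqrt (sqrt (B x)) ^ 2) ^ 2" unfolding s_def by simp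
    then show ?thesis using Bpos by simp
  qed
  have r2: "A x = r x ^ 2" using Apos unfolding r_def by simp
  have ds: "(s has_real_derivative C x / (2 * s x ^ 3)) (at x)"
  proof -
    have "(s has_real_derivative inverse (sqrt (sqrt (B x))) / 2 * (inverse (sqrt (B x)) / 2 * (2 * C x))) (at x)"
      unfolding s_def using Bpos
      by (intro derivative_eq_intros DERIV_chain2[OF DERIV_real_sqrt] dB) auto
    moreover have "sqrt (B x) = s x ^ 2" unfolding s_def using Bpos by simp
    ultimately show ?thesis using spos unfolding s_def by (simp add: field_simps power_def)
  qed
  have dr: "(r has_real_derivative P x / r x) (at x)"
    unfolding r_def using Apos
    by (auto intro!: derivative_eq_intros DERIV_chain2[OF DERIV_real_sqrt] dA simp: field_simps)
  show "(curve_ratio \<phi> \<phi>1 a has_real_derivative curve_ratio' \<phi> \<phi>1 \<phi>2 a x) (at x)"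
    unfolding w w1 using spos rpos
    by (auto intro!: derivative_eq_intros dr ds simp: field_simps power_def)
  define w2 where "w2 = (B x + Q x) / (r x * s x) - P x ^ 2 / (r x ^ 3 * s x)
      - P x * C x / (r x * s x ^ 5) - r x * (D x + E x) / (2 * s x ^ 5)
      + 5 * r x * C x ^ 2 / (4 * s x ^ 9)"
  have dw1: "(curve_ratio' \<phi> \<phi>1 \<phi>2 a has_real_derivative w2) (at x)"
    unfolding w1 w2_def using spos rpos
    by (auto intro!: derivative_eq_intros dr ds dP dC simp: field_simps power_def)
  \<comment> \<open>Numerator of w'' + (S1/2) w after clearing the positive denominator r^3 s^9.\<close>
  define N where "N = (B x)^2 * (B x + Q x) * (A x) - (B x)^2 * (P x)^2 - P x * C x * B x * A x
        + (1/4) * (A x)^2 * (B x * D x - (C x)^2)"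
  have N: "N \<ge> 0"
    using inner_square_completion[of "\<phi>1 x" "R x" "\<phi>2 x"] Bpos
    unfolding N_def A_def B_def C_def D_def P_def Q_def by (simp add: inner_commute)
  have S1: "ahlfors_S1 (\<phi>1 x) (\<phi>2 x) (\<phi>3 x) = E x / s x ^ 4 - 3 * C x ^ 2 / s x ^ 8 + 3/2 * D x / s x ^ 4"
  proof -
    have n2: "(norm (\<phi>1 x))^2 = s x ^ 4" using s4 unfolding B_def by (simp add: power2_norm_eq_inner)
    have "(norm (\<phi>1 x))^4 = ((norm (\<phi>1 x))^2)^2" by simp
    then have n4: "(norm (\<phi>1 x))^4 = s x ^ 8" using n2 by simp
    show ?thesis unfolding ahlfors_S1_def n2 n4 C_def D_def E_def by (simp add: power2_norm_eq_inner)
  qed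
  have "w2 + ahlfors_S1 (\<phi>1 x) (\<phi>2 x) (\<phi>3 x) / 2 * curve_ratio \<phi> \<phi>1 a x = N / (r x ^ 3 * s x ^ 9)"
    unfolding w w2_def S1 N_def r2 s4 using spos rpos by (simp add: field_simps power_def)
  also have "\<dots> \<ge> 0" using N spos rpos by simp
  finally show "\<exists>w2. (curve_ratio' \<phi> \<phi>1 \<phi>2 a has_real_derivative w2) (at x)
             \<and> w2 + ahlfors_S1 (\<phi>1 x) (\<phi>2 x) (\<phi>3 x) / 2 * curve_ratio \<phi> \<phi>1 a x \<ge> 0"
    using dw1 by blast
qed

lemma wronskian_comparison:
  fixes u u1 w w1 p :: "real \<Rightarrow> real"
  assumes "a < t"
    and du: "\<forall>x\<in>{a<..t}. (u has_real_derivative u1 x) (at x)"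
    and du1: "\<forall>x\<in>{a<..t}. (u1 has_real_derivative - p x * u x) (at x)"
    and u_pos: "\<forall>x\<in>{a<..t}. u x > 0"
    and dw: "\<forall>x\<in>{a<..<t}. (w has_real_derivative w1 x) (at x)"
    and dw1: "\<forall>x\<in>{a<..<t}. \<exists>w2. (w1 has_real_derivative w2) (at x) \<and> w2 + p x * w x \<ge> 0"
    and w_left: "(w \<longlongrightarrow> w t) (at_left t)"
    and W_base: "((\<lambda>x. w1 x * u x - w x * u1 x) \<longlongrightarrow> 0) (at_right a)"
    and ratio_base: "((\<lambda>x. w x / u x) \<longlongrightarrow> c) (at_right a)"
  shows "c * u t \<le> w t"
proof -
  define W where "W = (\<lambda>x. w1 x * u x - w x * u1 x)"
  have W_mono: "W x \<le> W y" if "a < x" "x \<le> y" "y < t" for x y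
  proof (rule DERIV_nonneg_imp_nondecreasing[OF that(2)])
    fix z assume "x \<le> z" "z \<le> y"
    then have z: "z \<in> {a<..<t}" using that by auto
    then obtain w2 where dw1z: "(w1 has_real_derivative w2) (at z)"
      and super: "w2 + p z * w z \<ge> 0"
      using dw1 by blast
    have "(W has_real_derivative u z * (w2 + p z * w z)) (at z)"
      unfolding W_def using z du du1 dw
      by (auto intro!: derivative_eq_intros dw1z simp: algebra_simps)
    moreover have "u z > 0" using u_pos z by auto
    then have "u z * (w2 + p z * w z) \<ge> 0" using super by simp
    ultimately show "\<exists>d. DERIV W z :> d \<and> d \<ge> 0" by blast
  qed
  have W_nonneg: "0 \<le> W y" if "a < y" "y < t" for y
  proof -
    have "\<forall>\<^sub>F x in at_right a. W x \<le> W y"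
      unfolding eventually_at_right_field using that W_mono by (intro exI[of _ y]) auto
    then show ?thesis
      using tendsto_upperbound[OF W_base[folded W_def]] trivial_limit_at_right_real by blast
  qed
  have ratio_mono: "w x / u x \<le> w y / u y" if "a < x" "x \<le> y" "y < t" for x y
  proof (rule DERIV_nonneg_imp_nondecreasing[OF that(2)])
    fix z assume "x \<le> z" "z \<le> y"
    then have z: "z \<in> {a<..<t}" using that by auto
    have "u z \<noteq> 0" using u_pos z by force
    then have "((\<lambda>x. w x / u x) has_real_derivative W z / (u z)^2) (at z)"
      unfolding W_def using z du dw
      by (auto intro!: derivative_eq_intros simp: field_simps power_def)
    moreover have "W z / (u z)^2 \<ge> 0" using W_nonneg z by simp
    ultimately show "\<exists>d. DERIV (\<lambda>x. w x / u x) z :> d \<and> d \<ge> 0" by blast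
  qed
  have below: "c * u y \<le> w y" if "a < y" "y < t" for y
  proof -
    have "\<forall>\<^sub>F x in at_right a. w x / u x \<le> w y / u y"
      unfolding eventually_at_right_field using that ratio_mono by (intro exI[of _ y]) auto
    then have "c \<le> w y / u y"
      using tendsto_upperbound[OF ratio_base] trivial_limit_at_right_real by blast
    then show ?thesis using u_pos that by (simp add: pos_le_divide_eq)
  qed
  have "isCont u t" using du \<open>a < t\<close> by (intro DERIV_isCont) auto
  then have "((\<lambda>x. c * u x) \<longlongrightarrow> c * u t) (at_left t)"
    unfolding isCont_def filterlim_at_split by (auto intro: tendsto_mult_left)
  moreover have "\<forall>\<^sub>F x in at_left t. c * u x \<le> w x"
    unfolding eventually_at_left_field using below \<open>a < t\<close> by (intro exI[of _ a]) auto
  ultimately show ?thesis by (rule tendsto_le[OF trivial_limit_at_left_real w_left])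
qed

text \<open>The same conclusion for a nonnegative w that is a supersolution only where it is positive:
  a first zero of w in (a, b) would contradict the comparison up to that zero.\<close>
lemma sturm_comparison:
  fixes u u1 w w1 p :: "real \<Rightarrow> real"
  assumes "a < b"
    and du: "\<forall>x\<in>{a<..b}. (u has_real_derivative u1 x) (at x)"
    and du1: "\<forall>x\<in>{a<..b}. (u1 has_real_derivative - p x * u x) (at x)"
    and u_pos: "\<forall>x\<in>{a<..b}. u x > 0"
    and w_nonneg: "\<forall>x\<in>{a<..b}. w x \<ge> 0"
    and w_cont: "\<forall>x\<in>{a<..b}. isCont w x"
    and dw: "\<forall>x\<in>{a<..b}. w x > 0 \<longrightarrow> (w has_real_derivative w1 x) (at x)"
    and dw1: "\<forall>x\<in>{a<..b}. w x > 0 \<longrightarrow>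
                (\<exists>w2. (w1 has_real_derivative w2) (at x) \<and> w2 + p x * w x \<ge> 0)"
    and W_base: "((\<lambda>x. w1 x * u x - w x * u1 x) \<longlongrightarrow> 0) (at_right a)"
    and ratio_base: "((\<lambda>x. w x / u x) \<longlongrightarrow> c) (at_right a)"
    and "c > 0"
  shows "c * u b \<le> w b"
proof -
  have compare: "c * u t \<le> w t" if "a < t" "t \<le> b" "\<forall>x\<in>{a<..<t}. w x > 0" for t
  proof (rule wronskian_comparison[OF \<open>a < t\<close> _ _ _ _ _ _ W_base ratio_base])
    show "(w \<longlongrightarrow> w t) (at_left t)"
      using w_cont that unfolding isCont_def filterlim_at_split by auto
  qed (use that du du1 u_pos dw dw1 in auto)
  obtain d where "d > a" and w_pos_near: "\<forall>x. a < x \<and> x < d \<longrightarrow> w x > 0"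
  proof -
    have "\<forall>\<^sub>F x in at_right a. w x / u x > 0"
      using order_tendstoD(1)[OF ratio_base \<open>c > 0\<close>] .
    moreover have "\<forall>\<^sub>F x in at_right a. x \<in> {a<..b}"
      unfolding eventually_at_right_field using \<open>a < b\<close> by (intro exI[of _ b]) auto
    ultimately have "\<forall>\<^sub>F x in at_right a. w x > 0"
      by eventually_elim (use u_pos in \<open>force simp: zero_less_divide_iff\<close>)
    then show ?thesis using that unfolding eventually_at_right_field by blast
  qed
  have "\<forall>x\<in>{a<..<b}. w x > 0"
  proof (rule ccontr)
    assume "\<not> (\<forall>x\<in>{a<..<b}. w x > 0)"
    define Z where "Z = {x \<in> {a<..<b}. w x \<le> 0}"
    define t where "t = Inf Z"
    obtain z0 where z0: "z0 \<in> Z" using \<open>\<not> (\<forall>x\<in>{a<..<b}. w x > 0)\<close> unfolding Z_def by force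
    have Z_bdd: "bdd_below Z" unfolding Z_def by (rule bdd_belowI[of _ a]) auto
    have t_le: "t \<le> z" if "z \<in> Z" for z
      unfolding t_def using cInf_lower[OF that Z_bdd] .
    have "d \<le> t" unfolding t_def
      by (rule cInf_greatest) (use z0 w_pos_near in \<open>force simp: Z_def\<close>)+
    then have "a < t" using \<open>d > a\<close> by simp
    have "t < b" using t_le[OF z0] z0 unfolding Z_def by simp
    have "\<forall>x\<in>{a<..<t}. w x > 0"
      using t_le \<open>t < b\<close> unfolding Z_def by force
    then have "c * u t \<le> w t" using compare \<open>a < t\<close> \<open>t < b\<close> by simp
    moreover have "c * u t > 0" using \<open>c > 0\<close> u_pos \<open>a < t\<close> \<open>t < b\<close> by simp
    ultimately have "w t > 0" by linarith
    moreover have "(w \<longlongrightarrow> w t) (at t)"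
      using w_cont \<open>a < t\<close> \<open>t < b\<close> unfolding isCont_def by simp
    ultimately have "\<forall>\<^sub>F y in at t. w y > 0" using order_tendstoD(1) by blast
    then obtain e where "e > 0" and "\<forall>y. y \<noteq> t \<and> dist y t < e \<longrightarrow> w y > 0"
      unfolding eventually_at by auto
    then have w_pos_ball: "\<forall>y. dist y t < e \<longrightarrow> w y > 0" using \<open>w t > 0\<close> by auto
    have "Inf Z < t + e" using \<open>e > 0\<close> unfolding t_def by simp
    then obtain z where "z \<in> Z" "z < t + e"
      using cInf_less_iff[OF _ Z_bdd] z0 by blast
    then have "dist z t < e" using t_le[of z] by (simp add: dist_real_def)
    then show False using w_pos_ball \<open>z \<in> Z\<close> unfolding Z_def by force
  qed
  then show ?thesis using compare[of b] \<open>a < b\<close> by simp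
qed

lemma base_point_limits:
  fixes F F1 F2 F3 :: "real \<Rightarrow> real" and \<phi> \<phi>1 \<phi>2 \<phi>3 :: "real \<Rightarrow> 'a::real_inner"
  assumes dF: "(F has_real_derivative F1 a) (at a)"
    and dF1: "(F1 has_real_derivative F2 a) (at a)"
    and dF2: "(F2 has_real_derivative F3 a) (at a)"
    and F1_pos: "F1 a > 0"
    and d\<phi>: "(\<phi> has_vector_derivative \<phi>1 a) (at a)"
    and d\<phi>1: "(\<phi>1 has_vector_derivative \<phi>2 a) (at a)"
    and d\<phi>2: "(\<phi>2 has_vector_derivative \<phi>3 a) (at a)"
    and nz: "\<phi>1 a \<noteq> 0"
  defines "u \<equiv> normalized_difference F F1 a" and "u1 \<equiv> normalized_difference' F F1 F2 a"
    and "w \<equiv> curve_ratio \<phi> \<phi>1 a" and "w1 \<equiv> curve_ratio' \<phi> \<phi>1 \<phi>2 a"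
  shows "((\<lambda>x. w1 x * u x - w x * u1 x) \<longlongrightarrow> 0) (at_right a)"
    and "((\<lambda>x. w x / u x) \<longlongrightarrow> sqrt (norm (\<phi>1 a)) / sqrt (F1 a)) (at_right a)"
proof -
  have right_limit: "(f \<longlongrightarrow> f a) (at_right a)" if "continuous (at a) f" for f :: "real \<Rightarrow> 'a"
    using that unfolding continuous_at by (rule tendsto_mono[OF at_within_le_at])
  have right_limit_real: "(f \<longlongrightarrow> f a) (at_right a)" if "isCont f a" for f :: "real \<Rightarrow> real"
    using that unfolding isCont_def by (rule tendsto_mono[OF at_within_le_at])
  note has_vector_derivative_continuous[THEN right_limit]
  then have c\<phi>: "(\<phi> \<longlongrightarrow> \<phi> a) (at_right a)" and c\<phi>1: "(\<phi>1 \<longlongrightarrow> \<phi>1 a) (at_right a)"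
    and c\<phi>2: "(\<phi>2 \<longlongrightarrow> \<phi>2 a) (at_right a)"
    using d\<phi> d\<phi>1 d\<phi>2 by auto
  note DERIV_isCont[THEN right_limit_real]
  then have cF: "(F \<longlongrightarrow> F a) (at_right a)" and cF1: "(F1 \<longlongrightarrow> F1 a) (at_right a)"
    and cF2: "(F2 \<longlongrightarrow> F2 a) (at_right a)"
    using dF dF1 dF2 by auto
  define s where "s = (\<lambda>x. sqrt (norm (\<phi>1 x)))"
  have s_lim: "(s \<longlongrightarrow> s a) (at_right a)" unfolding s_def by (intro tendsto_intros c\<phi>1)
  have s_pos: "s a > 0" using nz unfolding s_def by simp
  \<comment> \<open>Both the curve and the model function separate linearly from the base point.\<close>
  define q1 where "q1 = (\<lambda>x. norm (\<phi> x - \<phi> a) / (x - a))"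
  define q2 where "q2 = (\<lambda>x. u x / (x - a))"
  have q1: "(q1 \<longlongrightarrow> norm (\<phi>1 a)) (at_right a)"
    unfolding q1_def by (rule norm_difference_quotient_at_right[OF d\<phi>])
  have q2: "(q2 \<longlongrightarrow> sqrt (F1 a)) (at_right a)"
  proof -
    have "((\<lambda>x. (F x - F a) / (x - a)) \<longlongrightarrow> F1 a) (at_right a)"
      using dF unfolding has_field_derivative_iff by (rule tendsto_mono[OF at_within_le_at])
    then have "((\<lambda>x. (F x - F a) / (x - a) / sqrt (F1 x)) \<longlongrightarrow> F1 a / sqrt (F1 a)) (at_right a)"
      using cF1 F1_pos by (intro tendsto_intros) auto
    moreover have "F1 a / sqrt (F1 a) = sqrt (F1 a)" using F1_pos by (simp add: real_div_sqrt)
    ultimately show ?thesis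
      unfolding q2_def u_def normalized_difference_def by (simp add: divide_divide_eq_left mult.commute)
  qed
  have ev_right: "\<forall>\<^sub>F x in at_right a. x > a" by (simp add: eventually_at_right_less)
  have "\<forall>\<^sub>F x in at_right a. q1 x > 0"
    using order_tendstoD(1)[OF q1] nz by simp
  then have ev_sep: "\<forall>\<^sub>F x in at_right a. norm (\<phi> x - \<phi> a) > 0"
    using ev_right by eventually_elim (simp add: q1_def zero_less_divide_iff)
  have ev_s: "\<forall>\<^sub>F x in at_right a. s x > 0" using order_tendstoD(1)[OF s_lim s_pos] .
  have "((\<lambda>x. ((\<phi> x - \<phi> a) \<bullet> \<phi>1 x) * q2 x / (q1 x * s x)
          - norm (\<phi> x - \<phi> a) * (\<phi>1 x \<bullet> \<phi>2 x) / (2 * s x ^ 5) * u x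
          - norm (\<phi> x - \<phi> a) / s x * u1 x)
        \<longlongrightarrow> ((\<phi> a - \<phi> a) \<bullet> \<phi>1 a) * sqrt (F1 a) / (norm (\<phi>1 a) * s a)
          - norm (\<phi> a - \<phi> a) * (\<phi>1 a \<bullet> \<phi>2 a) / (2 * s a ^ 5) * ((F a - F a) / sqrt (F1 a))
          - norm (\<phi> a - \<phi> a) / s a * u1 a) (at_right a)"
    unfolding u_def u1_def normalized_difference_def normalized_difference'_def
    using c\<phi> c\<phi>1 c\<phi>2 cF cF1 cF2 q1 q2 s_lim
      s_pos nz F1_pos
    by (intro tendsto_intros) auto
  then have "((\<lambda>x. ((\<phi> x - \<phi> a) \<bullet> \<phi>1 x) * q2 x / (q1 x * s x)
          - norm (\<phi> x - \<phi> a) * (\<phi>1 x \<bullet> \<phi>2 x) / (2 * s x ^ 5) * u x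
          - norm (\<phi> x - \<phi> a) / s x * u1 x) \<longlongrightarrow> 0) (at_right a)"
    by simp
  then show "((\<lambda>x. w1 x * u x - w x * u1 x) \<longlongrightarrow> 0) (at_right a)"
  proof (rule Lim_transform_eventually)
    show "\<forall>\<^sub>F x in at_right a. ((\<phi> x - \<phi> a) \<bullet> \<phi>1 x) * q2 x / (q1 x * s x)
          - norm (\<phi> x - \<phi> a) * (\<phi>1 x \<bullet> \<phi>2 x) / (2 * s x ^ 5) * u x
          - norm (\<phi> x - \<phi> a) / s x * u1 x = w1 x * u x - w x * u1 x"
      using ev_right ev_sep ev_s
      by eventually_elim
         (simp add: w_def w1_def curve_ratio_def curve_ratio'_def q1_def q2_def s_def field_simps)
  qed
  have "((\<lambda>x. q1 x / s x / q2 x) \<longlongrightarrow> norm (\<phi>1 a) / s a / sqrt (F1 a)) (at_right a)"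
    using q1 q2 s_lim s_pos F1_pos by (intro tendsto_intros) auto
  moreover have "norm (\<phi>1 a) / s a = sqrt (norm (\<phi>1 a))"
    unfolding s_def by (simp add: real_div_sqrt)
  ultimately have "((\<lambda>x. q1 x / s x / q2 x) \<longlongrightarrow> sqrt (norm (\<phi>1 a)) / sqrt (F1 a)) (at_right a)"
    by simp
  then show "((\<lambda>x. w x / u x) \<longlongrightarrow> sqrt (norm (\<phi>1 a)) / sqrt (F1 a)) (at_right a)"
  proof (rule Lim_transform_eventually)
    show "\<forall>\<^sub>F x in at_right a. q1 x / s x / q2 x = w x / u x"
      using ev_right by eventually_elim (simp add: w_def curve_ratio_def q1_def q2_def s_def)
  qed
qed

lemma two_point_comparison:
  fixes F F1 F2 F3 :: "real \<Rightarrow> real" and \<phi> \<phi>1 \<phi>2 \<phi>3 :: "real \<Rightarrow> 'a::real_inner"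
  assumes "a < b"
    and F_d1: "\<forall>x\<in>{a..b}. (F has_real_derivative F1 x) (at x)"
    and F_d2: "\<forall>x\<in>{a..b}. (F1 has_real_derivative F2 x) (at x)"
    and F_d3: "\<forall>x\<in>{a..b}. (F2 has_real_derivative F3 x) (at x)"
    and F1_pos: "\<forall>x\<in>{a..b}. F1 x > 0"
    and phi_d1: "\<forall>x\<in>{a..b}. (\<phi> has_vector_derivative \<phi>1 x) (at x)"
    and phi_d2: "\<forall>x\<in>{a..b}. (\<phi>1 has_vector_derivative \<phi>2 x) (at x)"
    and phi_d3: "\<forall>x\<in>{a..b}. (\<phi>2 has_vector_derivative \<phi>3 x) (at x)"
    and phi_nz: "\<forall>x\<in>{a..b}. \<phi>1 x \<noteq> 0"
    and S_le: "\<forall>x\<in>{a..b}. ahlfors_S1 (\<phi>1 x) (\<phi>2 x) (\<phi>3 x) \<le> schwarzian_val (F1 x) (F2 x) (F3 x)"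
  shows "\<bar>F b - F a\<bar> / sqrt (F1 a * F1 b) \<le> norm (\<phi> b - \<phi> a) / sqrt (norm (\<phi>1 a) * norm (\<phi>1 b))"
proof -
  define p where "p x = schwarzian_val (F1 x) (F2 x) (F3 x) / 2" for x
  define u where "u = normalized_difference F F1 a"
  define u1 where "u1 = normalized_difference' F F1 F2 a"
  define w where "w = curve_ratio \<phi> \<phi>1 a"
  define w1 where "w1 = curve_ratio' \<phi> \<phi>1 \<phi>2 a"
  define c where "c = sqrt (norm (\<phi>1 a)) / sqrt (F1 a)"
  have a_in: "a \<in> {a..b}" and b_in: "b \<in> {a..b}" using \<open>a < b\<close> by auto
  have F_increasing: "\<forall>x\<in>{a<..b}. F a < F x"
    using DERIV_pos_imp_increasing[of a _ F] F_d1 F1_pos by force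
  have "c * u b \<le> w b"
  proof (rule sturm_comparison[OF \<open>a < b\<close>, where p = p])
    have "(u has_real_derivative u1 x) (at x) \<and> (u1 has_real_derivative - p x * u x) (at x)"
      if "x \<in> {a..b}" for x
      unfolding u_def u1_def p_def
      using normalized_difference_derivatives[of F F1 x F2 F3 a] that F_d1 F_d2 F_d3 F1_pos by auto
    then show "\<forall>x\<in>{a<..b}. (u has_real_derivative u1 x) (at x)"
      and "\<forall>x\<in>{a<..b}. (u1 has_real_derivative - p x * u x) (at x)"
      by auto
    show "\<forall>x\<in>{a<..b}. u x > 0"
      using F_increasing F1_pos by (simp add: u_def normalized_difference_def)
    show "\<forall>x\<in>{a<..b}. w x \<ge> 0" by (simp add: w_def curve_ratio_def)
    show "\<forall>x\<in>{a<..b}. isCont w x"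
    proof
      fix x assume "x \<in> {a<..b}"
      then have x: "x \<in> {a..b}" by simp
      have "isCont \<phi> x" "isCont \<phi>1 x" "\<phi>1 x \<noteq> 0"
        using has_vector_derivative_continuous phi_d1 phi_d2 phi_nz x by blast+
      then show "isCont w x"
        unfolding w_def curve_ratio_def[abs_def] by (intro continuous_intros) auto
    qed
    have "(w has_real_derivative w1 x) (at x)
          \<and> (\<exists>w2. (w1 has_real_derivative w2) (at x) \<and> w2 + p x * w x \<ge> 0)"
      if x: "x \<in> {a..b}" and "w x > 0" for x
    proof -
      have "\<phi> x \<noteq> \<phi> a" using \<open>w x > 0\<close> by (auto simp: w_def curve_ratio_def)
      note derivs = curve_ratio_derivatives[of \<phi> \<phi>1 x \<phi>2 \<phi>3, OF _ _ _ _ this]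
      have "(w has_real_derivative w1 x) (at x)"
        unfolding w_def w1_def using derivs(1) x phi_d1 phi_d2 phi_d3 phi_nz by auto
      moreover obtain w2 where "(w1 has_real_derivative w2) (at x)"
        and super: "w2 + ahlfors_S1 (\<phi>1 x) (\<phi>2 x) (\<phi>3 x) / 2 * w x \<ge> 0"
        unfolding w_def w1_def using derivs(2) x phi_d1 phi_d2 phi_d3 phi_nz by auto
      moreover have "ahlfors_S1 (\<phi>1 x) (\<phi>2 x) (\<phi>3 x) / 2 * w x \<le> p x * w x"
        using S_le x \<open>w x > 0\<close> unfolding p_def by (intro mult_right_mono) auto
      ultimately show ?thesis by auto
    qed
    then show "\<forall>x\<in>{a<..b}. w x > 0 \<longrightarrow> (w has_real_derivative w1 x) (at x)"
      and "\<forall>x\<in>{a<..b}. w x > 0 \<longrightarrow>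
             (\<exists>w2. (w1 has_real_derivative w2) (at x) \<and> w2 + p x * w x \<ge> 0)"
      by auto
    show "((\<lambda>x. w1 x * u x - w x * u1 x) \<longlongrightarrow> 0) (at_right a)"
      and "((\<lambda>x. w x / u x) \<longlongrightarrow> c) (at_right a)"
      unfolding u_def u1_def w_def w1_def c_def
      using base_point_limits[of F F1 a F2 F3 \<phi> \<phi>1 \<phi>2 \<phi>3] a_in F_d1 F_d2 F_d3 F1_pos
        phi_d1 phi_d2 phi_d3 phi_nz by auto
    show "c > 0" using a_in F1_pos phi_nz by (simp add: c_def)
  qed
  moreover have "\<bar>F b - F a\<bar> = F b - F a" using F_increasing[rule_format, of b] \<open>a < b\<close> by simp
  ultimately show ?thesis
    using a_in b_in F1_pos phi_nz
    by (simp add: c_def u_def w_def normalized_difference_def curve_ratio_def real_sqrt_mult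
        field_simps)
qed

lemma connected_nonvanishing_sign:
  fixes g :: "'a::topological_space \<Rightarrow> real"
  assumes "connected S" "continuous_on S g" "\<forall>x\<in>S. g x \<noteq> 0" "x0 \<in> S" "g x0 > 0"
  shows "\<forall>x\<in>S. g x > 0"
proof
  fix x assume "x \<in> S"
  have "connected (g ` S)" using connected_continuous_image[OF assms(2,1)] .
  then have "g x \<le> 0 \<Longrightarrow> 0 \<in> g ` S"
    using \<open>x \<in> S\<close> assms(4,5) unfolding connected_iff_interval by fastforce
  then show "g x > 0" using assms(3) \<open>x \<in> S\<close> by force
qed

theorem theorem2:
  fixes p F F1 F2 F3 :: "real \<Rightarrow> real"
    and \<phi> \<phi>1 \<phi>2 \<phi>3 :: "real \<Rightarrow> 'a::euclidean_space"
  assumes p_pos: "\<forall>x\<in>{-1<..<1}. p x > 0"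
    and p_cont: "continuous_on {-1<..<1} p"
    and p_even: "\<forall>x\<in>{-1<..<1}. p (-x) = p x"
    and p_disc: "disconjugate p"
    and F_d1: "\<forall>x\<in>{-1<..<1}. (F has_real_derivative F1 x) (at x)"
    and F_d2: "\<forall>x\<in>{-1<..<1}. (F1 has_real_derivative F2 x) (at x)"
    and F_d3: "\<forall>x\<in>{-1<..<1}. (F2 has_real_derivative F3 x) (at x)"
    and F_nz: "\<forall>x\<in>{-1<..<1}. F1 x \<noteq> 0"
    and F_S: "\<forall>x\<in>{-1<..<1}. schwarzian_val (F1 x) (F2 x) (F3 x) = 2 * p x"
    and F_init: "F 0 = 0" "F1 0 = 1" "F2 0 = 0"
    and phi_d1: "\<forall>x\<in>{-1<..<1}. (\<phi> has_vector_derivative \<phi>1 x) (at x)"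
    and phi_d2: "\<forall>x\<in>{-1<..<1}. (\<phi>1 has_vector_derivative \<phi>2 x) (at x)"
    and phi_d3: "\<forall>x\<in>{-1<..<1}. (\<phi>2 has_vector_derivative \<phi>3 x) (at x)"
    and phi_C3: "continuous_on {-1<..<1} \<phi>3"
    and phi_nz: "\<forall>x\<in>{-1<..<1}. \<phi>1 x \<noteq> 0"
    and phi_S: "\<forall>x\<in>{-1<..<1}. ahlfors_S1 (\<phi>1 x) (\<phi>2 x) (\<phi>3 x) \<le> 2 * p x"
    and x12: "x1 \<in> {-1<..<1}" "x2 \<in> {-1<..<1}"
  shows "norm (\<phi> x1 - \<phi> x2) / sqrt (norm (\<phi>1 x1) * norm (\<phi>1 x2))
           \<ge> \<bar>F x1 - F x2\<bar> / sqrt (F1 x1 * F1 x2)"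
proof -
  have "continuous_on {-1<..<1} F1"
    using F_d2 by (intro continuous_at_imp_continuous_on) (auto intro: DERIV_isCont)
  then have F1_pos: "\<forall>x\<in>{-1<..<1}. F1 x > 0"
    using connected_nonvanishing_sign[of "{-1<..<1}" F1 0] F_nz F_init(2) by simp
  have comparison: "\<bar>F b - F a\<bar> / sqrt (F1 a * F1 b)
                    \<le> norm (\<phi> b - \<phi> a) / sqrt (norm (\<phi>1 a) * norm (\<phi>1 b))"
    if "a < b" "a \<in> {-1<..<1}" "b \<in> {-1<..<1}" for a b
  proof (rule two_point_comparison[OF \<open>a < b\<close>])
    have sub: "{a..b} \<subseteq> {-1<..<1}" using that by auto
    show "\<forall>x\<in>{a..b}. ahlfors_S1 (\<phi>1 x) (\<phi>2 x) (\<phi>3 x) \<le> schwarzian_val (F1 x) (F2 x) (F3 x)"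
      using sub phi_S F_S by fastforce
  qed (use that F_d1 F_d2 F_d3 F1_pos phi_d1 phi_d2 phi_d3 phi_nz in auto)
  consider "x1 < x2" | "x1 = x2" | "x2 < x1" by linarith
  then show ?thesis
  proof cases
    case 1
    then show ?thesis using comparison[OF 1 x12] by (simp add: abs_minus_commute norm_minus_commute)
  next
    case 3
    then show ?thesis using comparison[OF 3 x12(2,1)] by (simp add: mult.commute)
  qed simp
qed

end
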